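(* Fix $r\in(0,1)$, $\gamma\in\mathbb R$, $b\in(0,\infty)$ and $\theta\in\mathbb R$ with $\theta/\pi$ irrational. For $\delta\in(0,\tfrac12)$ and integers $q,k\ge1$, $N\ge2$, let $E_{q,k}(\delta,N)$ be the set of all $\beta\in[0,\pi)$ such that $$\sup_{\tau\in[1,r^{-qk}]}\frac1N\#\Big\{n\in[N]:\ \big\|b\tau r^{\,q-qk(N-n)}\cos(\beta+\gamma-nqk\theta)\big\|\le\frac{r^{2qk}}{15}\Big\}>1-\delta,$$ and let $$E=\bigcap_{i\ge3}\ \bigcup_{q,k\ge1}\ \limsup_{N\to\infty}E_{q,k}(1/i,N).$$ Then $\dim_H E=0$.
   Context: For $x\in\mathbb R$, $\|x\|=\min\{|x-j|:j\in\mathbb Z\}$ is the distance to the nearest integer; $[N]=\{1,\dots,N\}$; $\limsup_{N}E_N=\bigcap_{N_0}\bigcup_{N\ge N_0}E_N$. *)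

theory Defs
  imports "HOL-Analysis.Analysis"
begin

definition dist_int :: "real \<Rightarrow> real" where
  "dist_int x = Inf {\<bar>x - of_int j\<bar> | j. True}"

definition hausdorff_pre :: "real \<Rightarrow> real \<Rightarrow> real set \<Rightarrow> ennreal" where
  "hausdorff_pre s d A = (INF U \<in> {U :: nat \<Rightarrow> real set.
       A \<subseteq> (\<Union>i. U i) \<and> (\<forall>i. bounded (U i) \<and> diameter (U i) \<le> d)}.
       (\<Sum>i. ennreal (diameter (U i) powr s)))"

definition hausdorff_measure :: "real \<Rightarrow> real set \<Rightarrow> ennreal" where
  "hausdorff_measure s A = (SUP d \<in> {0<..}. hausdorff_pre s d A)"

definition hausdorff_dim :: "real set \<Rightarrow> real" where
  "hausdorff_dim A = Inf {s. 0 \<le> s \<and> hausdorff_measure s A = 0}"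

definition Eqk :: "real \<Rightarrow> real \<Rightarrow> real \<Rightarrow> real \<Rightarrow> nat \<Rightarrow> nat \<Rightarrow> real \<Rightarrow> nat \<Rightarrow> real set" where
  "Eqk r \<gamma> b \<theta> q k \<delta> N = {\<beta> \<in> {0..<pi}.
     (SUP \<tau> \<in> {1 .. r powr (- real (q*k))}.
        real (card {n \<in> {1..N}.
           dist_int (b * \<tau> * r powr (real q - real (q*k) * (real N - real n))
                     * cos (\<beta> + \<gamma> - real n * real q * real k * \<theta>))
           \<le> r ^ (2*q*k) / 15}) / real N) > 1 - \<delta>}"

definition Eset :: "real \<Rightarrow> real \<Rightarrow> real \<Rightarrow> real \<Rightarrow> real set" where
  "Eset r \<gamma> b \<theta> = (\<Inter>i\<in>{3::nat..}. \<Union>q\<in>{1::nat..}. \<Union>k\<in>{1::nat..}.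
      \<Inter>N0. \<Union>N\<in>{N. N \<ge> N0 \<and> N \<ge> 2}. Eqk r \<gamma> b \<theta> q k (1 / real i) N)"

end

theory Submission
  imports Defs
begin

text \<open>
  Write Y_n = b \<tau> r^(q - qk(N-n)) cos(\<beta> + \<gamma> - n\<alpha>) with \<alpha> = qk\<theta> and R = r^(-qk).  These
  numbers satisfy Y_n = 2R cos \<alpha> Y_(n+1) - R^2 Y_(n+2), so if n, n+1, n+2 are all good
  (Y_j within r^(2qk)/15 of an integer), the integers nearest to Y_(n+1), Y_(n+2) determine
  the one nearest to Y_n; otherwise there are O(R^2) choices.  For \<beta> in E_{q,k}(\<delta>,N) some
  \<tau> makes all but \<delta>N indices good.  Grouping the bad indices into blocks of length l and
  counting backwards from n = N, where |Y_n| \<le> bR, the pair of integers nearest to Y_1, Y_2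
  takes at most 2^(N/l) O(R^2)^(3l\<delta>N) values, and since sin \<alpha> \<noteq> 0 (\<theta>/\<pi> is irrational)
  each value confines \<beta> to an interval of length O(R^(-N)).  For l large and \<delta> small these
  covers have s-dimensional cost decaying geometrically in N, so each limsup set
  limsup_N E_{q,k}(\<delta>,N) is H^s-null, and so is the countable union containing E.
\<close>

lemma hausdorff_pre_le_cover:
  assumes "A \<subseteq> (\<Union>n. U n)" "\<And>n. bounded (U n)" "\<And>n. diameter (U n) \<le> d"
  shows "hausdorff_pre s d A \<le> (\<Sum>n. ennreal (diameter (U n) powr s))"
  unfolding hausdorff_pre_def by (rule INF_lower) (use assms in auto)

lemma hausdorff_pre_mono: "A \<subseteq> B \<Longrightarrow> hausdorff_pre s d A \<le> hausdorff_pre s d B"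
  unfolding hausdorff_pre_def by (rule INF_mono) auto

lemma suminf_prod_decode:
  fixes f :: "nat \<times> nat \<Rightarrow> ennreal"
  shows "(\<Sum>n. f (prod_decode n)) = (\<Sum>p. \<Sum>m. f (p, m))"
proof -
  have "(\<Sum>n. f (prod_decode n)) = (\<integral>\<^sup>+n. f (prod_decode n) \<partial>count_space UNIV)"
    by (simp add: nn_integral_count_space_nat)
  also have "\<dots> = (\<integral>\<^sup>+x. f x \<partial>count_space UNIV)"
    by (rule nn_integral_bij_count_space) (rule bij_prod_decode)
  also have "\<dots> = (\<integral>\<^sup>+ p. \<integral>\<^sup>+ m. f (p, m) \<partial>count_space UNIV \<partial>count_space UNIV)"
    by (rule nn_integral_fst_count_space[symmetric])
  also have "\<dots> = (\<Sum>p. \<Sum>m. f (p, m))"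
    by (simp add: nn_integral_count_space_nat)
  finally show ?thesis .
qed

lemma hausdorff_pre_le_double_cover:
  assumes "A \<subseteq> (\<Union>p. \<Union>m. V p m)" "\<And>p m. bounded (V p m)" "\<And>p m. diameter (V p m) \<le> d"
  shows "hausdorff_pre s d A \<le> (\<Sum>p. \<Sum>m. ennreal (diameter (V p m) powr s))"
proof -
  have "A \<subseteq> (\<Union>n. case_prod V (prod_decode n))"
    using assms(1) by (force simp: split: prod.splits intro: exI[where x="prod_encode (_, _)"])
  then have "hausdorff_pre s d A \<le> (\<Sum>n. ennreal (diameter (case_prod V (prod_decode n)) powr s))"
    by (rule hausdorff_pre_le_cover) (use assms(2,3) in \<open>auto split: prod.splits\<close>)
  also have "\<dots> = (\<Sum>p. \<Sum>m. ennreal (diameter (V p m) powr s))"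
    using suminf_prod_decode[of "\<lambda>(p, m). ennreal (diameter (V p m) powr s)"]
    by (simp add: case_prod_beta)
  finally show ?thesis .
qed

lemma hausdorff_pre_UN_le:
  "hausdorff_pre s d (\<Union>p. B p) \<le> (\<Sum>p. hausdorff_pre s d (B p))"
proof (rule ennreal_le_epsilon)
  fix e :: real
  assume fin: "(\<Sum>p. hausdorff_pre s d (B p)) < top" and e: "0 < e"
  define e' where "e' p = e * (1/2) ^ Suc p" for p
  have "\<exists>U. (B p \<subseteq> (\<Union>n. U n) \<and> (\<forall>n. bounded (U n) \<and> diameter (U n) \<le> d))
      \<and> (\<Sum>n. ennreal (diameter (U n) powr s)) < hausdorff_pre s d (B p) + ennreal (e' p)" for p
  proof -
    have "hausdorff_pre s d (B p) < top" using ennreal_suminf_lessD[OF fin] .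
    moreover have "0 < e' p" using e by (simp add: e'_def)
    ultimately have "hausdorff_pre s d (B p) < hausdorff_pre s d (B p) + ennreal (e' p)"
      by (simp add: less_le)
    then show ?thesis unfolding hausdorff_pre_def INF_less_iff by (simp only: mem_Collect_eq Bex_def)
  qed
  then obtain U where U: "\<And>p. B p \<subseteq> (\<Union>n. U p n)" "\<And>p n. bounded (U p n)" "\<And>p n. diameter (U p n) \<le> d"
    and sums: "\<And>p. (\<Sum>n. ennreal (diameter (U p n) powr s)) < hausdorff_pre s d (B p) + ennreal (e' p)"
    using choice[of "\<lambda>p U. (B p \<subseteq> (\<Union>n. U n) \<and> (\<forall>n. bounded (U n) \<and> diameter (U n) \<le> d))
      \<and> (\<Sum>n. ennreal (diameter (U n) powr s)) < hausdorff_pre s d (B p) + ennreal (e' p)"] by blast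
  have "(\<Union>p. B p) \<subseteq> (\<Union>p. \<Union>n. U p n)" by (rule UN_mono) (simp_all add: U(1))
  then have "hausdorff_pre s d (\<Union>p. B p) \<le> (\<Sum>p. \<Sum>n. ennreal (diameter (U p n) powr s))"
    using U(2,3) by (rule hausdorff_pre_le_double_cover)
  also have "\<dots> \<le> (\<Sum>p. hausdorff_pre s d (B p) + ennreal (e' p))"
    by (intro suminf_le summableI less_imp_le sums)
  also have "\<dots> = (\<Sum>p. hausdorff_pre s d (B p)) + (\<Sum>p. ennreal (e' p))"
    by (rule suminf_add[symmetric]) (rule summableI)+
  also have "(\<Sum>p. ennreal (e' p)) = ennreal (\<Sum>p. e' p)"
    using e by (intro suminf_ennreal2) (auto simp: e'_def intro!: summable_mult summable_geometric)
  also have "(\<Sum>p. e' p) = e"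
    using suminf_mult[OF summable_geometric[of "1/2::real"], of "e/2"]
    by (simp add: e'_def suminf_geometric algebra_simps)
  finally show "hausdorff_pre s d (\<Union>p. B p) \<le> (\<Sum>p. hausdorff_pre s d (B p)) + ennreal e" .
qed

lemma hausdorff_pre_UN_eq_0:
  assumes "0 \<le> d" "countable I" "\<And>i. i \<in> I \<Longrightarrow> hausdorff_pre s d (B i) = 0"
  shows "hausdorff_pre s d (\<Union>i\<in>I. B i) = 0"
proof (cases "I = {}")
  case False
  then have "(\<Union>i\<in>I. B i) = (\<Union>n. B (from_nat_into I n))"
    by (metis image_image range_from_nat_into[OF False assms(2)])
  also have "hausdorff_pre s d \<dots> \<le> (\<Sum>n. hausdorff_pre s d (B (from_nat_into I n)))"
    by (rule hausdorff_pre_UN_le)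
  also have "\<dots> = 0" using assms(3) from_nat_into[OF False] by simp
  finally show ?thesis by simp
next
  case True
  have "hausdorff_pre s d {} \<le> (\<Sum>n. ennreal (diameter ({} :: real set) powr s))"
    by (rule hausdorff_pre_le_cover) (use assms(1) in auto)
  then show ?thesis using True by simp
qed

lemma hausdorff_pre_le_finite_cover:
  assumes "finite X" "A \<subseteq> \<Union>X" "\<And>x. x \<in> X \<Longrightarrow> bounded x \<and> diameter x \<le> D"
    and "0 \<le> D" "D \<le> d" "0 \<le> s"
  shows "hausdorff_pre s d A \<le> ennreal (real (card X) * D powr s)"
proof -
  obtain h where h: "bij_betw h {..<card X} X"
    using ex_bij_betw_nat_finite[OF assms(1)] by (auto simp: atLeast0LessThan)
  define U where "U j = (if j < card X then h j else {})" for j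
  \<comment> \<open>padding with empty sets is free because \<open>0 powr s = 0\<close>\<close>
  have U: "bounded (U j) \<and> diameter (U j) \<le> D" for j
  proof (cases "j < card X")
    case True
    then have "h j \<in> X" using bij_betwE[OF h] by simp
    then show ?thesis using assms(3) True by (simp add: U_def)
  qed (use assms(4) in \<open>simp add: U_def\<close>)
  have "x \<in> range U" if "x \<in> X" for x
  proof -
    have "x \<in> h ` {..<card X}" using that by (simp add: bij_betw_imp_surj_on[OF h])
    then obtain j where "j \<in> {..<card X}" "x = h j" by (rule imageE)
    then have "U j = x" by (simp add: U_def)
    then show ?thesis by (metis rangeI)
  qed
  then have "\<Union>X \<subseteq> (\<Union>j. U j)" by (intro Union_mono subsetI)
  then have "A \<subseteq> (\<Union>j. U j)" by (rule order_trans[OF assms(2)])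
  moreover have "diameter (U j) \<le> d" for j using U[of j] assms(5) by simp
  ultimately have "hausdorff_pre s d A \<le> (\<Sum>j. ennreal (diameter (U j) powr s))"
    using U by (intro hausdorff_pre_le_cover) auto
  also have "\<dots> = (\<Sum>j<card X. ennreal (diameter (U j) powr s))"
    by (rule suminf_finite) (auto simp: U_def)
  also have "\<dots> = ennreal (\<Sum>j<card X. diameter (U j) powr s)"
    by (rule sum_ennreal) simp
  also have "\<dots> \<le> ennreal (real (card X) * D powr s)"
  proof (rule ennreal_leI)
    have "diameter (U j) powr s \<le> D powr s" for j
      using U[of j] diameter_ge_0[of "U j"] assms(6) by (intro powr_mono2) auto
    then have "(\<Sum>j<card X. diameter (U j) powr s) \<le> (\<Sum>j<card X. D powr s)"
      by (intro sum_mono)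
    then show "(\<Sum>j<card X. diameter (U j) powr s) \<le> real (card X) * D powr s" by simp
  qed
  finally show ?thesis .
qed

lemma hausdorff_pre_limsup_eq_0:
  assumes "summable c" "\<And>N. 0 \<le> c N" "\<And>N. M \<le> N \<Longrightarrow> hausdorff_pre s d (A N) \<le> ennreal (c N)"
  shows "hausdorff_pre s d (\<Inter>N0. \<Union>N\<in>{N0..}. A N) = 0"
proof -
  have bound: "hausdorff_pre s d (\<Inter>N0. \<Union>N\<in>{N0..}. A N) \<le> 0 + ennreal e" if "0 < e" for e
  proof -
    from suminf_exist_split[OF \<open>0 < e\<close> assms(1)]
    obtain K0 where K0: "\<forall>K\<ge>K0. norm (\<Sum>n. c (n + K)) < e" ..
    define K where "K = max K0 M"
    have "(\<Inter>N0. \<Union>N\<in>{N0..}. A N) \<subseteq> (\<Union>n. A (n + K))"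
    proof
      fix x assume "x \<in> (\<Inter>N0. \<Union>N\<in>{N0..}. A N)"
      then obtain N where "K \<le> N" "x \<in> A N" by blast
      then have "x \<in> A ((N - K) + K)" by simp
      then show "x \<in> (\<Union>n. A (n + K))" by (rule UN_I[OF UNIV_I])
    qed
    then have "hausdorff_pre s d (\<Inter>N0. \<Union>N\<in>{N0..}. A N) \<le> hausdorff_pre s d (\<Union>n. A (n + K))"
      by (rule hausdorff_pre_mono)
    also have "\<dots> \<le> (\<Sum>n. hausdorff_pre s d (A (n + K)))"
      by (rule hausdorff_pre_UN_le)
    also have "\<dots> \<le> (\<Sum>n. ennreal (c (n + K)))"
      by (intro suminf_le summableI assms(3)) (simp add: K_def)
    also have "\<dots> = ennreal (\<Sum>n. c (n + K))"
      using assms(1,2) by (intro suminf_ennreal2) auto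
    also have "\<dots> \<le> 0 + ennreal e"
      using K0[rule_format, of K] by (intro add_increasing order_refl ennreal_leI) (simp_all add: K_def)
    finally show ?thesis .
  qed
  have "hausdorff_pre s d (\<Inter>N0. \<Union>N\<in>{N0..}. A N) \<le> 0"
    by (rule ennreal_le_epsilon) (rule bound)
  then show ?thesis by simp
qed

lemma hausdorff_measure_eq_0I:
  assumes "\<And>d. 0 < d \<Longrightarrow> hausdorff_pre s d A = 0"
  shows "hausdorff_measure s A = 0"
  using assms unfolding hausdorff_measure_def by simp

lemma hausdorff_dim_eq_0I:
  assumes "\<And>s. 0 < s \<Longrightarrow> hausdorff_measure s A = 0"
  shows "hausdorff_dim A = 0"
proof -
  let ?S = "{s. 0 \<le> s \<and> hausdorff_measure s A = 0}"
  have bdd: "bdd_below ?S" by (auto intro: bdd_belowI[of _ 0])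
  have "1 \<in> ?S" using assms by auto
  then have "0 \<le> Inf ?S" by (intro cInf_greatest) (blast, simp)
  moreover have "Inf ?S \<le> e" if "e > 0" for e
    by (rule cInf_lower) (use assms that bdd in auto)
  ultimately show ?thesis unfolding hausdorff_dim_def
    by (meson dense_le_bounded linorder_not_le order_antisym_conv zero_less_one)
qed

lemma x_cos_le_sin:
  fixes x :: real assumes "0 \<le> x" "x \<le> pi" shows "x * cos x \<le> sin x"
proof -
  have "(\<lambda>t. sin t - t * cos t) 0 \<le> (\<lambda>t. sin t - t * cos t) x"
  proof (rule DERIV_nonneg_imp_nondecreasing[OF assms(1)])
    fix t assume t: "0 \<le> t" "t \<le> x"
    have "DERIV (\<lambda>t. sin t - t * cos t) t :> cos t - (1 * cos t + t * (- sin t))"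
      by (intro derivative_eq_intros) auto
    moreover have "cos t - (1 * cos t + t * (- sin t)) = t * sin t" by simp
    moreover have "0 \<le> t * sin t" using t assms by (intro mult_nonneg_nonneg sin_ge_zero) auto
    ultimately show "\<exists>y. DERIV (\<lambda>t. sin t - t * cos t) t :> y \<and> 0 \<le> y" by auto
  qed
  then show ?thesis by simp
qed

lemma Jordan_inequality:
  fixes x :: real assumes "0 \<le> x" "x \<le> pi/2" shows "2 * x / pi \<le> sin x"
proof (cases "x = 0")
  case True then show ?thesis by simp
next
  case False
  then have x0: "0 < x" using assms by simp
  have "(\<lambda>t. sin t / t) (pi/2) \<le> (\<lambda>t. sin t / t) x"
  proof (rule DERIV_nonpos_imp_nonincreasing[OF assms(2)])
    fix t assume t: "x \<le> t" "t \<le> pi/2"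
    then have t0: "0 < t" using x0 by simp
    have "DERIV (\<lambda>t. sin t / t) t :> (cos t * t - sin t * 1) / (t * t)"
      using t0 by (intro derivative_eq_intros) auto
    moreover have "(cos t * t - sin t * 1) / (t * t) \<le> 0"
      using x_cos_le_sin[of t] t0 t pi_gt_zero by (intro divide_nonpos_nonneg) (auto simp: mult.commute)
    ultimately show "\<exists>y. DERIV (\<lambda>t. sin t / t) t :> y \<and> y \<le> 0" by auto
  qed
  then have "1 / (pi/2) \<le> sin x / x" by simp
  then show ?thesis using x0 pi_gt_zero by (simp add: field_simps)
qed

lemma abs_mult_diff_le:
  fixes u v c c' \<eta> :: real
  assumes "\<bar>u\<bar> \<le> \<eta>" "\<bar>v\<bar> \<le> \<eta>" "\<bar>c\<bar> \<le> 1" "\<bar>c'\<bar> \<le> 1"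
  shows "\<bar>u * c - v * c'\<bar> \<le> 2 * \<eta>"
proof -
  have "\<bar>u * c\<bar> \<le> \<eta> * 1" "\<bar>v * c'\<bar> \<le> \<eta> * 1"
    using assms unfolding abs_mult by (intro mult_mono; simp)+
  then show ?thesis by linarith
qed

lemma sum_squares_mult_sin_sq_le:
  fixes x y a \<eta> :: real
  assumes h1: "\<bar>x * cos a + y * sin a\<bar> \<le> \<eta>" and h2: "\<bar>x * cos (2*a) + y * sin (2*a)\<bar> \<le> \<eta>"
  shows "(x^2 + y^2) * (sin a)^2 \<le> 8 * \<eta>^2"
proof -
  define d1 where "d1 = x * cos a + y * sin a"
  define d2 where "d2 = x * cos (2*a) + y * sin (2*a)"
  have det: "cos a * sin (2*a) - cos (2*a) * sin a = sin a"
    using sin_diff[of "2*a" a] by (simp add: mult.commute)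
  have "d1 * sin (2*a) - d2 * sin a = x * (cos a * sin (2*a) - cos (2*a) * sin a)"
    unfolding d1_def d2_def by (simp add: algebra_simps)
  then have "\<bar>x * sin a\<bar> \<le> 2 * \<eta>"
    using abs_mult_diff_le[of d1 \<eta> d2 "sin (2*a)" "sin a"] h1 h2 unfolding det d1_def d2_def by simp
  then have "(x * sin a)^2 \<le> (2 * \<eta>)^2"
    using power_mono[OF _ abs_ge_zero, of "x * sin a" "2 * \<eta>" 2] by simp
  moreover have "d2 * cos a - d1 * cos (2*a) = y * (cos a * sin (2*a) - cos (2*a) * sin a)"
    unfolding d1_def d2_def by (simp add: algebra_simps)
  then have "\<bar>y * sin a\<bar> \<le> 2 * \<eta>"
    using abs_mult_diff_le[of d2 \<eta> d1 "cos a" "cos (2*a)"] h1 h2 unfolding det d1_def d2_def by simp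
  then have "(y * sin a)^2 \<le> (2 * \<eta>)^2"
    using power_mono[OF _ abs_ge_zero, of "y * sin a" "2 * \<eta>" 2] by simp
  ultimately show ?thesis by (simp add: power_mult_distrib algebra_simps)
qed

lemma polar_diff_sq_ge:
  fixes \<tau>1 \<tau>2 p1 p2 :: real
  assumes "1 \<le> \<tau>1" "1 \<le> \<tau>2"
  shows "4 * (sin ((p1 - p2) / 2))^2 \<le> (\<tau>1 * cos p1 - \<tau>2 * cos p2)^2 + (\<tau>1 * sin p1 - \<tau>2 * sin p2)^2"
proof -
  define c where "c = cos (p1 - p2)"
  have "c = cos (2 * ((p1 - p2) / 2))" unfolding c_def by (simp only: times_divide_eq_right nonzero_mult_div_cancel_left zero_neq_numeral)
  then have half: "2 - 2 * c = 4 * (sin ((p1 - p2) / 2))^2" by (simp only: cos_double_sin) simp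
  have "(\<tau>1 * cos p1 - \<tau>2 * cos p2)^2 + (\<tau>1 * sin p1 - \<tau>2 * sin p2)^2
      = \<tau>1^2 * ((cos p1)^2 + (sin p1)^2) + \<tau>2^2 * ((cos p2)^2 + (sin p2)^2) - 2 * \<tau>1 * \<tau>2 * c"
    unfolding c_def cos_diff power2_eq_square by algebra
  also have "\<dots> = (\<tau>1 - \<tau>2)^2 + 2 * (\<tau>1 * \<tau>2 - 1) * (1 - c) + (2 - 2 * c)"
    by (simp add: power2_eq_square algebra_simps)
  finally have eq: "(\<tau>1 * cos p1 - \<tau>2 * cos p2)^2 + (\<tau>1 * sin p1 - \<tau>2 * sin p2)^2
      = (\<tau>1 - \<tau>2)^2 + 2 * (\<tau>1 * \<tau>2 - 1) * (1 - c) + 4 * (sin ((p1 - p2) / 2))^2"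
    unfolding half .
  have "1 \<le> \<tau>1 * \<tau>2" using assms by (metis mult_mono' mult_1 zero_le_one)
  then have "0 \<le> 2 * (\<tau>1 * \<tau>2 - 1) * (1 - c)" by (simp add: c_def)
  then show ?thesis unfolding eq using zero_le_power2[of "\<tau>1 - \<tau>2"] by linarith
qed

lemma abs_le_pi_mult_abs_sin_half:
  fixes x :: real
  assumes "\<bar>x\<bar> \<le> pi"
  shows "\<bar>x\<bar> \<le> pi * \<bar>sin (x / 2)\<bar>"
proof -
  have "2 * (\<bar>x\<bar> / 2) / pi \<le> sin (\<bar>x\<bar> / 2)" using assms by (intro Jordan_inequality) auto
  moreover have "sin (\<bar>x\<bar> / 2) = \<bar>sin (x / 2)\<bar>"
    using assms sin_ge_zero[of "x / 2"] sin_ge_zero[of "- x / 2"] by (cases "0 \<le> x") auto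
  ultimately show ?thesis by (simp add: field_simps)
qed

lemma angle_diff_le:
  fixes \<tau>1 \<tau>2 \<beta>1 \<beta>2 a \<eta> g :: real
  assumes "1 \<le> \<tau>1" "1 \<le> \<tau>2" "\<beta>1 \<in> {0..<pi}" "\<beta>2 \<in> {0..<pi}" "sin a \<noteq> 0"
    and h1: "\<bar>\<tau>1 * cos (\<beta>1 + g - a) - \<tau>2 * cos (\<beta>2 + g - a)\<bar> \<le> \<eta>"
    and h2: "\<bar>\<tau>1 * cos (\<beta>1 + g - 2*a) - \<tau>2 * cos (\<beta>2 + g - 2*a)\<bar> \<le> \<eta>"
  shows "\<bar>\<beta>1 - \<beta>2\<bar> \<le> 2 * pi * \<eta> / \<bar>sin a\<bar>"
proof -
  define x where "x = \<tau>1 * cos (\<beta>1 + g) - \<tau>2 * cos (\<beta>2 + g)"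
  define y where "y = \<tau>1 * sin (\<beta>1 + g) - \<tau>2 * sin (\<beta>2 + g)"
  have "\<bar>x * cos a + y * sin a\<bar> \<le> \<eta>" "\<bar>x * cos (2*a) + y * sin (2*a)\<bar> \<le> \<eta>"
    using h1 h2 unfolding x_def y_def cos_diff by (simp_all add: algebra_simps)
  then have xy: "(x^2 + y^2) * (sin a)^2 \<le> 8 * \<eta>^2" by (rule sum_squares_mult_sin_sq_le)
  have "\<bar>\<beta>1 - \<beta>2\<bar> \<le> pi * \<bar>sin ((\<beta>1 - \<beta>2) / 2)\<bar>"
    using assms(3,4) by (intro abs_le_pi_mult_abs_sin_half) auto
  then have "(\<beta>1 - \<beta>2)^2 \<le> (pi * \<bar>sin ((\<beta>1 - \<beta>2) / 2)\<bar>)^2"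
    using power_mono[OF _ abs_ge_zero, of "\<beta>1 - \<beta>2" _ 2] by simp
  also have "\<dots> = pi^2 / 4 * (4 * (sin ((\<beta>1 - \<beta>2) / 2))^2)" by (simp add: power_mult_distrib)
  also have "\<dots> \<le> pi^2 / 4 * (x^2 + y^2)"
    using polar_diff_sq_ge[OF assms(1,2), of "\<beta>1 + g" "\<beta>2 + g"]
    unfolding x_def y_def by (intro mult_left_mono) simp_all
  finally have "(\<beta>1 - \<beta>2)^2 * (sin a)^2 \<le> pi^2 / 4 * (x^2 + y^2) * (sin a)^2"
    by (rule mult_right_mono) simp
  then have "(\<bar>\<beta>1 - \<beta>2\<bar> * \<bar>sin a\<bar>)^2 \<le> pi^2 / 4 * ((x^2 + y^2) * (sin a)^2)"
    by (simp only: power_mult_distrib power2_abs mult.assoc)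
  also have "\<dots> \<le> pi^2 / 4 * (8 * \<eta>^2)" using xy by (intro mult_left_mono) simp_all
  also have "\<dots> = 2 * (pi * \<eta>)^2" by (simp add: power_mult_distrib)
  also have "\<dots> \<le> (2 * pi * \<eta>)^2" by (simp add: power_mult_distrib)
  finally have "\<bar>\<beta>1 - \<beta>2\<bar> * \<bar>sin a\<bar> \<le> 2 * pi * \<eta>"
    by (rule power2_le_imp_le) (use abs_ge_zero[THEN order_trans, OF h1] in simp)
  then show ?thesis using assms(5) by (simp add: pos_le_divide_eq)
qed

lemma int_ball_eq_atLeastAtMost:
  fixes c M :: real
  shows "{a::int. \<bar>of_int a - c\<bar> \<le> M} = {\<lceil>c - M\<rceil>..\<lfloor>c + M\<rfloor>}"
  by (auto simp: abs_le_iff ceiling_le_iff le_floor_iff)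

lemma finite_int_ball: "finite {a::int. \<bar>of_int a - c\<bar> \<le> (M :: real)}"
  unfolding int_ball_eq_atLeastAtMost by simp

lemma card_int_ball_le:
  fixes c M :: real
  assumes "0 \<le> M"
  shows "real (card {a::int. \<bar>of_int a - c\<bar> \<le> M}) \<le> 2 * M + 1"
proof (cases "\<lceil>c - M\<rceil> \<le> \<lfloor>c + M\<rfloor>")
  case True
  then have "real (card {a::int. \<bar>of_int a - c\<bar> \<le> M}) = of_int \<lfloor>c + M\<rfloor> + 1 - of_int \<lceil>c - M\<rceil>"
    unfolding int_ball_eq_atLeastAtMost by simp
  then show ?thesis using of_int_floor_le[of "c + M"] le_of_int_ceiling[of "c - M"] by linarith
qed (use assms in \<open>simp add: int_ball_eq_atLeastAtMost\<close>)

lemma power_two_div_le_exp: "(2::real) ^ (N div l + 1) \<le> 2 * exp (ln 2 * real N / real l)"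
proof -
  have "real (N div l) * ln 2 \<le> real N / real l * ln 2"
    using of_nat_div_le_of_nat[of N l] by (rule mult_right_mono) simp
  then have "exp (real (N div l) * ln 2) \<le> exp (ln 2 * real N / real l)" by (simp add: mult.commute)
  then show ?thesis by (simp add: exp_of_nat_mult)
qed

lemma dist_int_eq_round: "dist_int x = \<bar>x - of_int (round x)\<bar>"
proof -
  let ?S = "{\<bar>x - of_int j\<bar> | j. True}"
  have "Inf ?S = \<bar>x - of_int (round x)\<bar>"
  proof (rule cInf_eq_minimum)
    show "\<bar>x - of_int (round x)\<bar> \<in> ?S" by blast
    fix y assume "y \<in> ?S"
    then show "\<bar>x - of_int (round x)\<bar> \<le> y" using round_diff_minimal[of x] by auto
  qed
  then show ?thesis unfolding dist_int_def .
qed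

locale cos_orbit =
  fixes r \<gamma> b \<theta> :: real and q k N :: nat
  assumes r0: "0 < r" and r1: "r < 1" and b0: "0 < b" and q1: "1 \<le> q" and k1: "1 \<le> k"
    and sin_qk: "sin (real q * real k * \<theta>) \<noteq> 0"
begin

definition R :: real where
  "R = r powr (- real (q*k))"
definition \<alpha> :: real where
  "\<alpha> = real q * real k * \<theta>"
definition amp :: "nat \<Rightarrow> real" where
  "amp n = r powr (real q - real (q*k) * (real N - real n))"
definition Y :: "nat \<Rightarrow> real \<Rightarrow> real \<Rightarrow> real" where
  "Y n \<beta> \<tau> = b * \<tau> * r powr (real q - real (q*k) * (real N - real n))
                     * cos (\<beta> + \<gamma> - real n * real q * real k * \<theta>)"
definition good :: "nat \<Rightarrow> real \<Rightarrow> real \<Rightarrow> bool" where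
  "good n \<beta> \<tau> \<longleftrightarrow> dist_int (Y n \<beta> \<tau>) \<le> r ^ (2*q*k) / 15"

lemma R_eq_power: "R = (1/r) ^ (q*k)"
  using r0 powr_realpow[of r "q*k"] by (simp add: R_def powr_minus_divide power_one_over)

lemma inverse_r_le_R: "1/r \<le> R"
proof -
  have "1 < 1/r" using r0 r1 by simp
  moreover have "1 \<le> q*k" using q1 k1 by simp
  ultimately have "(1/r)^1 \<le> (1/r)^(q*k)" by (intro power_increasing) auto
  then show ?thesis by (simp add: R_eq_power)
qed

lemma R_gt_1: "1 < R"
proof -
  have "1 < 1/r" using r0 r1 by simp
  then show ?thesis using inverse_r_le_R by linarith
qed
lemma R_pos: "0 < R" using R_gt_1 by simp

lemma r_power_2qk: "r ^ (2*q*k) = 1 / R^2"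
proof -
  have "2*q*k = (q*k)*2" by simp
  then show ?thesis by (simp only: R_eq_power power_one_over power_mult) simp
qed

lemma amp_pos: "0 < amp n" using r0 by (simp add: amp_def)

lemma amp_Suc: "amp n = R * amp (Suc n)"
proof -
  have "real q - real (q*k) * (real N - real n) =
        (real q - real (q*k) * (real N - real (Suc n))) + (- real (q*k))"
    by (simp add: algebra_simps)
  then have "amp n = r powr ((real q - real (q*k) * (real N - real (Suc n))) + (- real (q*k)))"
    unfolding amp_def by (simp only:)
  also have "\<dots> = R * amp (Suc n)" unfolding powr_add amp_def R_def by (simp only: mult.commute)
  finally show ?thesis .
qed

lemma Y_eq_amp: "Y n \<beta> \<tau> = b * \<tau> * amp n * cos (\<beta> + \<gamma> - real n * \<alpha>)"
  by (simp add: Y_def amp_def \<alpha>_def mult.assoc)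

lemma Y_recurrence: "Y n \<beta> \<tau> = 2 * R * cos \<alpha> * Y (Suc n) \<beta> \<tau> - R^2 * Y (Suc (Suc n)) \<beta> \<tau>"
proof -
  define x where "x = \<beta> + \<gamma> - real (Suc n) * \<alpha>"
  have e1: "\<beta> + \<gamma> - real n * \<alpha> = x + \<alpha>" unfolding x_def by (simp add: distrib_right)
  have e2: "\<beta> + \<gamma> - real (Suc (Suc n)) * \<alpha> = x - \<alpha>" unfolding x_def by (simp add: distrib_right)
  have p1: "amp n = R * amp (Suc n)" and p2: "amp (Suc n) = R * amp (Suc (Suc n))"
    by (rule amp_Suc)+
  have y0: "Y n \<beta> \<tau> = b*\<tau>*(R * (R * amp (Suc (Suc n))))*cos(x+\<alpha>)"
    by (simp only: Y_eq_amp e1 p1 p2)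
  have y1: "Y (Suc n) \<beta> \<tau> = b*\<tau>*(R * amp (Suc (Suc n)))*cos x"
    by (simp only: Y_eq_amp x_def p2)
  have y2: "Y (Suc (Suc n)) \<beta> \<tau> = b*\<tau>*amp (Suc (Suc n))*cos (x - \<alpha>)"
    by (simp only: Y_eq_amp e2)
  show ?thesis
    unfolding y0 y1 y2 cos_add cos_diff
    by (simp add: algebra_simps power2_eq_square)
qed

lemma good_imp_round_close:
  assumes "good n \<beta> \<tau>"
  shows "\<bar>Y n \<beta> \<tau> - of_int (round (Y n \<beta> \<tau>))\<bar> \<le> 1 / (15 * R^2)"
proof -
  have "dist_int (Y n \<beta> \<tau>) \<le> r ^ (2*q*k) / 15" using assms unfolding good_def .
  then show ?thesis unfolding dist_int_eq_round r_power_2qk by simp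
qed

definition good_on :: "nat set \<Rightarrow> (real \<times> real) set" where
  "good_on P = {(\<beta>,\<tau>). \<beta> \<in> {0..<pi} \<and> \<tau> \<in> {1..R} \<and> (\<forall>n\<in>P. good n \<beta> \<tau>)}"
definition cell :: "nat \<Rightarrow> real \<times> real \<Rightarrow> int \<times> int" where
  "cell n = (\<lambda>(\<beta>,\<tau>). (round (Y n \<beta> \<tau>), round (Y (Suc n) \<beta> \<tau>)))"
definition cells :: "nat set \<Rightarrow> nat \<Rightarrow> (int \<times> int) set" where
  "cells P n = cell n ` good_on P"
definition branch :: real where
  "branch = 2*R + R^2 + 2"
definition top_count :: real where
  "top_count = (2*b*R + 5)^2"

definition predict :: "int \<Rightarrow> int \<Rightarrow> real" where
  "predict m m' = 2 * R * cos \<alpha> * of_int m - R^2 * of_int m'"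

lemma branch_ge_1: "1 \<le> branch" unfolding branch_def using R_pos by (smt (verit) zero_le_power2)

lemma abs_Y_minus_predict_le:
  assumes "\<bar>Y (Suc n) \<beta> \<tau> - of_int m\<bar> \<le> e" "\<bar>Y (Suc (Suc n)) \<beta> \<tau> - of_int m'\<bar> \<le> e"
  shows "\<bar>Y n \<beta> \<tau> - predict m m'\<bar> \<le> (2 * R + R^2) * e"
proof -
  have "Y n \<beta> \<tau> - predict m m'
      = 2 * R * cos \<alpha> * (Y (Suc n) \<beta> \<tau> - m) - R^2 * (Y (Suc (Suc n)) \<beta> \<tau> - m')"
    unfolding predict_def by (subst Y_recurrence[of n]) (simp add: algebra_simps)
  moreover have "\<bar>2 * R * cos \<alpha> * (Y (Suc n) \<beta> \<tau> - m)\<bar> \<le> 2 * R * 1 * e"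
    unfolding abs_mult using R_pos assms(1) by (intro mult_mono) auto
  moreover have "\<bar>R^2 * (Y (Suc (Suc n)) \<beta> \<tau> - m')\<bar> \<le> R^2 * e"
    unfolding abs_mult using R_pos assms(2) by (intro mult_mono) auto
  ultimately show ?thesis by (simp add: algebra_simps)
qed

lemma cell_eq_round_Y:
  "cell n (\<beta>, \<tau>) = (round (Y n \<beta> \<tau>), fst (cell (Suc n) (\<beta>, \<tau>)))"
  by (simp add: cell_def)

lemma cell_in_cells: "(\<beta>, \<tau>) \<in> good_on P \<Longrightarrow> cell n (\<beta>, \<tau>) \<in> cells P n"
  unfolding cells_def by (rule imageI)

lemma card_cells_step:
  assumes fin: "finite (cells P (Suc n))"
  shows "finite (cells P n) \<and> real (card (cells P n)) \<le> branch * real (card (cells P (Suc n)))"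
proof -
  define M where "M = (2 * R + R^2) / 2 + 1 / 2"
  define I where "I mm = {a::int. \<bar>of_int a - predict (fst mm) (snd mm)\<bar> \<le> M}" for mm
  have sub: "cells P n \<subseteq> (\<Union>mm\<in>cells P (Suc n). (\<lambda>a. (a, fst mm)) ` I mm)"
  proof
    fix z assume "z \<in> cells P n"
    then obtain \<beta> \<tau> where bt: "(\<beta>,\<tau>) \<in> good_on P" and z: "z = cell n (\<beta>,\<tau>)"
      unfolding cells_def by auto
    define mm where "mm = cell (Suc n) (\<beta>, \<tau>)"
    have "\<bar>Y (Suc n) \<beta> \<tau> - of_int (fst mm)\<bar> \<le> 1/2" "\<bar>Y (Suc (Suc n)) \<beta> \<tau> - of_int (snd mm)\<bar> \<le> 1/2"
      unfolding mm_def cell_def using of_int_round_abs_le by (simp_all add: abs_minus_commute)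
    then have "\<bar>Y n \<beta> \<tau> - predict (fst mm) (snd mm)\<bar> \<le> (2 * R + R^2) * (1/2)"
      by (rule abs_Y_minus_predict_le)
    then have "round (Y n \<beta> \<tau>) \<in> I mm"
      using of_int_round_abs_le[of "Y n \<beta> \<tau>"] unfolding I_def M_def mem_Collect_eq by linarith
    moreover have "z = (round (Y n \<beta> \<tau>), fst mm)"
      unfolding z mm_def by (rule cell_eq_round_Y)
    ultimately show "z \<in> (\<Union>mm\<in>cells P (Suc n). (\<lambda>a. (a, fst mm)) ` I mm)"
      by (intro UN_I[OF cell_in_cells[OF bt, of "Suc n", folded mm_def]]) simp
  qed
  have finI: "finite (I mm)" for mm unfolding I_def by (rule finite_int_ball)
  have cardI: "real (card ((\<lambda>a. (a, fst mm)) ` I mm)) \<le> branch" for mm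
  proof -
    have "M \<ge> 0" unfolding M_def using R_pos by simp
    then have "real (card (I mm)) \<le> 2 * M + 1" unfolding I_def by (rule card_int_ball_le)
    also have "\<dots> = branch" unfolding M_def branch_def by simp
    finally have "real (card (I mm)) \<le> branch" .
    then show ?thesis using card_image_le[OF finI, of "\<lambda>a. (a, fst mm)" mm] by linarith
  qed
  have finU: "finite (\<Union>mm\<in>cells P (Suc n). (\<lambda>a. (a, fst mm)) ` I mm)"
    using fin finI by blast
  have "card (cells P n) \<le> (\<Sum>mm\<in>cells P (Suc n). card ((\<lambda>a. (a, fst mm)) ` I mm))"
    using card_mono[OF finU sub] card_UN_le[OF fin] by (rule order_trans)
  then have "real (card (cells P n)) \<le> (\<Sum>mm\<in>cells P (Suc n). real (card ((\<lambda>a. (a, fst mm)) ` I mm)))"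
    by (simp only: of_nat_le_iff flip: of_nat_sum)
  also have "\<dots> \<le> real (card (cells P (Suc n))) * branch"
    using cardI by (rule sum_bounded_above)
  finally show ?thesis using finite_subset[OF sub finU] by (simp add: mult.commute)
qed

lemma cells_step_good:
  assumes "n \<in> P" "Suc n \<in> P" "Suc (Suc n) \<in> P"
  shows "cells P n \<subseteq> (\<lambda>mm. (round (predict (fst mm) (snd mm)), fst mm)) ` cells P (Suc n)"
proof
  fix z assume "z \<in> cells P n"
  then obtain \<beta> \<tau> where bt: "(\<beta>,\<tau>) \<in> good_on P" and z: "z = cell n (\<beta>,\<tau>)"
    unfolding cells_def by auto
  have good: "\<bar>Y j \<beta> \<tau> - of_int (round (Y j \<beta> \<tau>))\<bar> \<le> 1 / (15 * R^2)" if "j \<in> P" for j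
    using bt that unfolding good_on_def by (auto intro: good_imp_round_close)
  define mm where "mm = cell (Suc n) (\<beta>, \<tau>)"
  have "\<bar>Y n \<beta> \<tau> - predict (fst mm) (snd mm)\<bar> \<le> (2 * R + R^2) * (1 / (15 * R^2))"
    using good[OF assms(2)] good[OF assms(3)] unfolding mm_def cell_def
    by (intro abs_Y_minus_predict_le) simp_all
  also have "\<dots> \<le> 3 / 15"
    using R_gt_1 by (simp add: field_simps power2_eq_square)
  finally have "\<bar>Y n \<beta> \<tau> - predict (fst mm) (snd mm)\<bar> \<le> 3 / 15" .
  moreover have "1 / (15 * R^2) \<le> 1 / 15" using R_gt_1 by (simp add: field_simps)
  ultimately have "\<bar>predict (fst mm) (snd mm) - of_int (round (Y n \<beta> \<tau>))\<bar> < 1/2"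
    using good[OF assms(1)] by linarith
  then have "round (predict (fst mm) (snd mm)) = round (Y n \<beta> \<tau>)" by (rule round_unique')
  moreover have "z = (round (Y n \<beta> \<tau>), fst mm)"
    unfolding z mm_def by (rule cell_eq_round_Y)
  ultimately show "z \<in> (\<lambda>mm. (round (predict (fst mm) (snd mm)), fst mm)) ` cells P (Suc n)"
    using cell_in_cells[OF bt, of "Suc n", folded mm_def] by (intro image_eqI[of _ _ mm]) simp_all
qed

lemma abs_Y_le:
  assumes "1 \<le> \<tau>" "\<tau> \<le> R" "N \<le> n"
  shows "\<bar>Y n \<beta> \<tau>\<bar> \<le> b * R"
proof -
  have "amp n \<le> 1"
  proof -
    have "real N - real n \<le> 0" using assms(3) by simp
    then have "real (q*k) * (real N - real n) \<le> 0" by (simp add: mult_nonneg_nonpos)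
    then have "0 \<le> real q - real (q*k) * (real N - real n)" by linarith
    then show ?thesis unfolding amp_def using r0 r1 by (intro powr_le1) auto
  qed
  then have "\<bar>Y n \<beta> \<tau>\<bar> \<le> b * R * 1 * 1"
    unfolding Y_eq_amp abs_mult using assms b0 amp_pos[of n]
    by (intro mult_mono) auto
  then show ?thesis by simp
qed

lemma card_cells_top: "finite (cells P N) \<and> real (card (cells P N)) \<le> top_count"
proof -
  define M0 where "M0 = \<lceil>b*R\<rceil> + 1"
  have sub: "cells P N \<subseteq> {-M0..M0} \<times> {-M0..M0}"
  proof
    fix z assume "z \<in> cells P N"
    then obtain \<beta> \<tau> where bt: "(\<beta>,\<tau>) \<in> good_on P" and z: "z = cell N (\<beta>,\<tau>)"
      unfolding cells_def by auto
    have t: "1 \<le> \<tau>" "\<tau> \<le> R" using bt unfolding good_on_def by auto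
    have "\<bar>(of_int (round y)::real)\<bar> \<le> of_int M0" if "\<bar>y\<bar> \<le> b*R" for y
    proof -
      have "\<bar>of_int (round y)\<bar> \<le> \<bar>y\<bar> + 1/2" using of_int_round_abs_le[of y] by linarith
      moreover have "b*R \<le> of_int \<lceil>b*R\<rceil>" by (rule le_of_int_ceiling)
      ultimately show ?thesis unfolding M0_def using that by (simp only: of_int_add of_int_1)
    qed
    then have "\<bar>round (Y n \<beta> \<tau>)\<bar> \<le> M0" if "N \<le> n" for n
      using abs_Y_le[OF t that] by (metis of_int_abs of_int_le_iff)
    then have h1: "\<bar>round (Y N \<beta> \<tau>)\<bar> \<le> M0" and h2: "\<bar>round (Y (Suc N) \<beta> \<tau>)\<bar> \<le> M0" by auto
    show "z \<in> {-M0..M0} \<times> {-M0..M0}" unfolding z cell_def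
      using h1 h2 by (auto simp: abs_le_iff)
  qed
  have "card (cells P N) \<le> card ({-M0..M0} \<times> {-M0..M0})"
    using card_mono[OF _ sub] by simp
  then have "real (card (cells P N)) \<le> real (card ({-M0..M0} \<times> {-M0..M0}))"
    by (simp only: of_nat_le_iff)
  also have "\<dots> = (real (nat (2*M0+1)))^2" by (simp add: card_cartesian_product power2_eq_square)
  also have "\<dots> \<le> top_count"
  proof -
    have "0 < b*R" using b0 R_pos by simp
    then have "0 \<le> M0" unfolding M0_def by (simp add: ceiling_le_zero[symmetric] order.strict_implies_order)
    then have "real (nat (2*M0+1)) = 2* of_int M0 + 1" by simp
    also have "\<dots> \<le> 2*b*R + 5" unfolding M0_def using ceiling_correct[of "b*R"] by simp
    finally show ?thesis unfolding top_count_def using \<open>0 \<le> M0\<close> by (intro power_mono) auto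
  qed
  finally show ?thesis using finite_subset[OF sub] by simp
qed

definition broken :: "nat set \<Rightarrow> nat \<Rightarrow> nat set" where
  "broken P n = {m \<in> {n..<N}. \<not> (m \<in> P \<and> Suc m \<in> P \<and> Suc (Suc m) \<in> P)}"

lemma card_cells_le:
  assumes "n \<le> N"
  shows "finite (cells P n) \<and> real (card (cells P n)) \<le> top_count * branch ^ card (broken P n)"
  using assms
proof (induction n rule: inc_induct)
  case base
  have "broken P N = {}" unfolding broken_def by auto
  then show ?case using card_cells_top by simp
next
  case (step n)
  note IH = step.IH
  show ?case
  proof (cases "n \<in> P \<and> Suc n \<in> P \<and> Suc (Suc n) \<in> P")
    case True
    then have bs: "broken P n = broken P (Suc n)" unfolding broken_def using step.hyps
      by auto (metis Suc_leI le_neq_implies_less)+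
    define g where "g = (\<lambda>mm. (round (predict (fst mm) (snd mm)), fst mm))"
    have sub: "cells P n \<subseteq> g ` cells P (Suc n)"
      unfolding g_def using cells_step_good True by blast
    have finS: "finite (cells P (Suc n))" using IH by blast
    have fin: "finite (cells P n)" using finite_subset[OF sub finite_imageI[OF finS]] .
    have "card (cells P n) \<le> card (g ` cells P (Suc n))" by (rule card_mono[OF finite_imageI[OF finS] sub])
    also have "\<dots> \<le> card (cells P (Suc n))" by (rule card_image_le[OF finS])
    finally have "real (card (cells P n)) \<le> real (card (cells P (Suc n)))" by (simp only: of_nat_le_iff)
    then show ?thesis using IH fin bs by simp
  next
    case False
    then have bs: "broken P n = insert n (broken P (Suc n))" unfolding broken_def using step.hyps by auto
    have nn: "n \<notin> broken P (Suc n)" unfolding broken_def by auto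
    have finBS: "finite (broken P (Suc n))" unfolding broken_def by auto
    have cb: "card (broken P n) = Suc (card (broken P (Suc n)))" unfolding bs using nn finBS by simp
    from card_cells_step[of P n] IH have h: "finite (cells P n)" "real (card (cells P n)) \<le> branch * real (card (cells P (Suc n)))"
      by auto
    have "branch * real (card (cells P (Suc n))) \<le> branch * (top_count * branch ^ card (broken P (Suc n)))"
      using IH branch_ge_1 by (intro mult_left_mono) auto
    also have "\<dots> = top_count * branch ^ card (broken P n)" unfolding cb by simp
    finally show ?thesis using h by linarith
  qed
qed

lemma card_broken_le: "card (broken P 1) \<le> 3 * card ({1..Suc N} - P)"
proof -
  define C where "C = {1..Suc N} - P"
  have sub: "broken P 1 \<subseteq> C \<union> (\<lambda>x. x - 1) ` C \<union> (\<lambda>x. x - 2) ` C"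
  proof
    fix m assume "m \<in> broken P 1"
    then have m: "1 \<le> m" "m < N" "\<not> (m \<in> P \<and> Suc m \<in> P \<and> Suc (Suc m) \<in> P)" unfolding broken_def by auto
    show "m \<in> C \<union> (\<lambda>x. x - 1) ` C \<union> (\<lambda>x. x - 2) ` C"
    proof (cases "m \<in> P")
      case False then show ?thesis using m unfolding C_def by auto
    next
      case True
      show ?thesis
      proof (cases "Suc m \<in> P")
        case False
        then have "Suc m \<in> C" using m unfolding C_def by auto
        then show ?thesis by (intro UnI1 UnI2) (rule image_eqI[where x="Suc m"], auto)
      next
        case True2: True
        then have "Suc (Suc m) \<notin> P" using m True by auto
        then have "Suc (Suc m) \<in> C" using m unfolding C_def by auto
        then show ?thesis by (intro UnI2) (rule image_eqI[where x="Suc (Suc m)"], auto)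
      qed
    qed
  qed
  have fC: "finite C" unfolding C_def by auto
  have "card (broken P 1) \<le> card (C \<union> (\<lambda>x. x - 1) ` C \<union> (\<lambda>x. x - 2) ` C)"
    by (rule card_mono) (use fC sub in auto)
  also have "\<dots> \<le> card C + card ((\<lambda>x. x - 1) ` C) + card ((\<lambda>x. x - 2) ` C)"
    by (metis (no_types, lifting) card_Un_le add_le_mono le_refl order_trans)
  also have "\<dots> \<le> card C + card C + card C"
    by (intro add_mono card_image_le fC le_refl)
  finally show ?thesis unfolding C_def by simp
qed

definition width :: real where
  "width = 2 * pi / (\<bar>sin \<alpha>\<bar> * (b * amp 2))"

lemma width_pos: "0 < width"
  unfolding width_def using sin_qk b0 amp_pos[of 2] by (simp add: \<alpha>_def)

lemma abs_cos_diff_le_of_abs_Y_diff: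
  assumes "\<bar>Y n \<beta>1 \<tau>1 - Y n \<beta>2 \<tau>2\<bar> < 1"
  shows "\<bar>\<tau>1 * cos (\<beta>1 + \<gamma> - real n * \<alpha>) - \<tau>2 * cos (\<beta>2 + \<gamma> - real n * \<alpha>)\<bar> \<le> 1 / (b * amp n)"
proof -
  have pos: "0 < b * amp n" using b0 amp_pos by simp
  have "Y n \<beta>1 \<tau>1 - Y n \<beta>2 \<tau>2
      = (b * amp n) * (\<tau>1 * cos (\<beta>1 + \<gamma> - real n * \<alpha>) - \<tau>2 * cos (\<beta>2 + \<gamma> - real n * \<alpha>))"
    unfolding Y_eq_amp by (simp add: algebra_simps)
  then have "(b * amp n) * \<bar>\<tau>1 * cos (\<beta>1 + \<gamma> - real n * \<alpha>) - \<tau>2 * cos (\<beta>2 + \<gamma> - real n * \<alpha>)\<bar> < 1"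
    using assms b0 amp_pos[of n] by (simp add: abs_mult)
  then show ?thesis using pos by (simp add: field_simps)
qed

lemma angle_diff_le_width:
  assumes "(\<beta>1,\<tau>1) \<in> good_on P" "(\<beta>2,\<tau>2) \<in> good_on P" "cell 1 (\<beta>1,\<tau>1) = cell 1 (\<beta>2,\<tau>2)"
  shows "\<bar>\<beta>1 - \<beta>2\<bar> \<le> width"
proof -
  have t: "1 \<le> \<tau>1" "1 \<le> \<tau>2" "\<beta>1 \<in> {0..<pi}" "\<beta>2 \<in> {0..<pi}"
    using assms(1,2) unfolding good_on_def by auto
  have "round (Y 1 \<beta>1 \<tau>1) = round (Y 1 \<beta>2 \<tau>2)" "round (Y 2 \<beta>1 \<tau>1) = round (Y 2 \<beta>2 \<tau>2)"
    using assms(3) unfolding cell_def by (auto simp: numeral_2_eq_2)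
  then have h1: "\<bar>\<tau>1 * cos (\<beta>1 + \<gamma> - \<alpha>) - \<tau>2 * cos (\<beta>2 + \<gamma> - \<alpha>)\<bar> \<le> 1 / (b * amp 1)"
    and h2: "\<bar>\<tau>1 * cos (\<beta>1 + \<gamma> - 2 * \<alpha>) - \<tau>2 * cos (\<beta>2 + \<gamma> - 2 * \<alpha>)\<bar> \<le> 1 / (b * amp 2)"
    using abs_cos_diff_le_of_abs_Y_diff[OF round_eq_imp_diff_1] by fastforce+
  have "amp 1 = R * amp 2" using amp_Suc[of 1] by (simp add: numeral_2_eq_2)
  then have "1 / (b * amp 1) \<le> 1 / (b * amp 2)"
    using R_gt_1 amp_pos[of 2] b0 by (intro divide_left_mono) simp_all
  with h1 have "\<bar>\<beta>1 - \<beta>2\<bar> \<le> 2 * pi * (1 / (b * amp 2)) / \<bar>sin \<alpha>\<bar>"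
    using angle_diff_le[OF t sin_qk[folded \<alpha>_def] _ h2] by simp
  also have "\<dots> = width" unfolding width_def by simp
  finally show ?thesis .
qed

definition width_coeff :: real where
  "width_coeff = 2 * pi / (\<bar>sin \<alpha>\<bar> * (b * r powr (real q + 2 * real (q*k))))"

lemma ln_R: "ln R = - real (q*k) * ln r" unfolding R_def using r0 by simp

lemma amp_2: "amp 2 = r powr (real q + 2 * real (q*k)) * exp (real N * ln R)"
proof -
  have "real q - real (q*k) * (real N - real (2::nat)) = (real q + 2 * real (q*k)) + (- real (q*k) * real N)"
    by (simp add: algebra_simps)
  then have "amp 2 = r powr ((real q + 2 * real (q*k)) + (- real (q*k) * real N))"
    unfolding amp_def by (simp only:)
  also have "\<dots> = r powr (real q + 2 * real (q*k)) * r powr (- real (q*k) * real N)" by (rule powr_add)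
  also have "r powr (- real (q*k) * real N) = exp (real N * ln R)"
    unfolding ln_R powr_def using r0 by (simp add: algebra_simps)
  finally show ?thesis .
qed

lemma width_eq: "width = width_coeff * exp (- (real N * ln R))"
  unfolding width_def width_coeff_def amp_2 by (simp add: exp_minus field_simps)

lemma width_coeff_pos: "0 < width_coeff" unfolding width_coeff_def using sin_qk b0 r0 by (simp add: \<alpha>_def)

lemma width_powr_eq: "width powr s = width_coeff powr s * exp (- (s * real N * ln R))"
proof -
  have "width powr s = width_coeff powr s * exp (- (real N * ln R)) powr s"
    unfolding width_eq using width_coeff_pos by (simp add: powr_mult)
  also have "exp (- (real N * ln R)) powr s = exp (- (s * real N * ln R))"
    unfolding powr_def by (simp add: algebra_simps)
  finally show ?thesis .
qed

lemma branch_le: "branch \<le> 5 * R^2"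
  unfolding branch_def using R_gt_1 by (simp add: power2_eq_square) (smt (verit) mult_le_cancel_right1)

lemma ln_branch_le: "ln branch \<le> ln 5 + 2 * ln R"
proof -
  have "ln branch \<le> ln (5 * R^2)" using branch_le branch_ge_1 by (subst ln_le_cancel_iff) auto
  also have "\<dots> = ln 5 + 2 * ln R" using R_pos by (simp add: ln_mult ln_realpow)
  finally show ?thesis .
qed

lemma ln_inverse_r_le_ln_R: "ln (1/r) \<le> ln R"
  using inverse_r_le_R r0 R_pos by (subst ln_le_cancel_iff) auto

end

text \<open>Choosing the blocks costs a factor 2^(N/l), each of the at most 3(l\<delta>N + 1) steps of the
  backward count that are not fully good costs branch \<le> 5R^2, and the width of a cell gains a
  factor R^(-s) per level; these conditions make the net exponent negative.\<close>

definition admissible_blocks :: "real \<Rightarrow> real \<Rightarrow> nat \<Rightarrow> real \<Rightarrow> bool" where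
  "admissible_blocks r s l \<delta> \<longleftrightarrow> 0 < s \<and> 0 \<le> \<delta> \<and> ln 2 / real l \<le> s * ln (1/r) / 4
     \<and> 3 * real l * \<delta> * ln 5 \<le> s * ln (1/r) / 4 \<and> 6 * real l * \<delta> \<le> s / 4"

locale cos_orbit_cover = cos_orbit +
  fixes l :: nat and \<delta> :: real
  assumes l1: "1 \<le> l" and N1: "1 \<le> N"
begin

text \<open>The bad indices of a parameter are grouped into blocks {t l..<(t+1) l}; D is the set of
  blocks containing a bad index and \<open>kept D\<close> the indices outside them.\<close>

definition kept :: "nat set \<Rightarrow> nat set" where
  "kept D = {n \<in> {1..N}. n div l \<notin> D}"
definition cell_angles :: "nat set \<Rightarrow> int \<times> int \<Rightarrow> real set" where
  "cell_angles D c = {\<beta>. \<exists>\<tau>. (\<beta>,\<tau>) \<in> good_on (kept D) \<and> cell 1 (\<beta>,\<tau>) = c}"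
definition exceptional :: "nat set set" where
  "exceptional = {D. D \<subseteq> {..N div l} \<and> real (card D) < \<delta> * real N}"
definition cover :: "real set set" where
  "cover = (\<lambda>(D,c). cell_angles D c) ` (SIGMA D:exceptional. cells (kept D) 1)"

lemma Eqk_imp_many_good:
  assumes "\<beta> \<in> Eqk r \<gamma> b \<theta> q k \<delta> N"
  obtains \<tau> where "\<tau> \<in> {1..R}" "(1 - \<delta>) * real N < real (card {n \<in> {1..N}. good n \<beta> \<tau>})"
proof -
  define f where "f \<tau> = real (card {n \<in> {1..N}. good n \<beta> \<tau>}) / real N" for \<tau>
  have sup: "1 - \<delta> < (SUP \<tau> \<in> {1..R}. f \<tau>)"
    using assms unfolding Eqk_def good_def Y_def R_def f_def by auto
  have "f \<tau> \<le> 1" for \<tau>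
  proof -
    have "card {n \<in> {1..N}. good n \<beta> \<tau>} \<le> card {1..N}" by (rule card_mono) auto
    then show ?thesis unfolding f_def using N1 by (simp add: divide_le_eq)
  qed
  then have bdd: "bdd_above (f ` {1..R})" by (intro bdd_aboveI[of _ 1]) auto
  have ne: "{1..R} \<noteq> {}" using R_gt_1 by simp
  obtain \<tau> where "\<tau> \<in> {1..R}" "1 - \<delta> < f \<tau>"
    using sup less_cSUP_iff[OF ne bdd] by blast
  then show ?thesis using N1 that unfolding f_def by (simp add: field_simps)
qed

lemma Eqk_subset_Union_cover: "Eqk r \<gamma> b \<theta> q k \<delta> N \<subseteq> \<Union> cover"
proof
  fix \<beta> assume \<beta>: "\<beta> \<in> Eqk r \<gamma> b \<theta> q k \<delta> N"
  then obtain \<tau> where \<tau>: "\<tau> \<in> {1..R}" and many: "(1 - \<delta>) * real N < real (card {n \<in> {1..N}. good n \<beta> \<tau>})"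
    by (rule Eqk_imp_many_good)
  define Bad where "Bad = {n \<in> {1..N}. \<not> good n \<beta> \<tau>}"
  have "card {n \<in> {1..N}. good n \<beta> \<tau>} + card Bad = card ({n \<in> {1..N}. good n \<beta> \<tau>} \<union> Bad)"
    by (rule card_Un_disjoint[symmetric]) (auto simp: Bad_def)
  also have "{n \<in> {1..N}. good n \<beta> \<tau>} \<union> Bad = {1..N}" unfolding Bad_def by auto
  finally have "card {n \<in> {1..N}. good n \<beta> \<tau>} + card Bad = N" by simp
  with many have card_Bad: "real (card Bad) < \<delta> * real N" by (simp add: algebra_simps flip: of_nat_add)
  define D where "D = (\<lambda>n. n div l) ` Bad"
  have "D \<subseteq> {..N div l}" unfolding D_def Bad_def by (auto intro: div_le_mono)
  moreover have "card D \<le> card Bad" unfolding D_def by (rule card_image_le) (simp add: Bad_def)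
  ultimately have D: "D \<in> exceptional" unfolding exceptional_def using card_Bad by auto
  have "good n \<beta> \<tau>" if "n \<in> kept D" for n
  proof -
    from that have "n \<in> {1..N}" "n div l \<notin> D" unfolding kept_def by auto
    then show ?thesis unfolding D_def Bad_def by auto
  qed
  moreover have "\<beta> \<in> {0..<pi}" using \<beta> unfolding Eqk_def by simp
  ultimately have bt: "(\<beta>,\<tau>) \<in> good_on (kept D)" unfolding good_on_def using \<tau> by simp
  have "cell_angles D (cell 1 (\<beta>,\<tau>)) \<in> cover" unfolding cover_def
    by (rule image_eqI[where x="(D, cell 1 (\<beta>,\<tau>))"]) (simp_all add: D cell_in_cells[OF bt])
  moreover have "\<beta> \<in> cell_angles D (cell 1 (\<beta>,\<tau>))" unfolding cell_angles_def using bt by blast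
  ultimately show "\<beta> \<in> \<Union> cover" by (rule UnionI)
qed

lemma cover_sets: "x \<in> cover \<Longrightarrow> bounded x \<and> diameter x \<le> width"
proof -
  assume "x \<in> cover"
  then obtain D c where x: "x = cell_angles D c" unfolding cover_def by auto
  have sub: "x \<subseteq> {0..pi}" unfolding x cell_angles_def good_on_def by auto
  have "bounded x" by (rule bounded_subset[OF bounded_closed_interval sub])
  moreover have "diameter x \<le> width"
  proof (rule diameter_le)
    show "x \<noteq> {} \<or> 0 \<le> width" using width_pos by simp
    fix y z assume "y \<in> x" "z \<in> x"
    then obtain t1 t2 where "(y,t1) \<in> good_on (kept D)" "cell 1 (y,t1) = c" "(z,t2) \<in> good_on (kept D)" "cell 1 (z,t2) = c"
      unfolding x cell_angles_def by auto
    then show "norm (y - z) \<le> width" using angle_diff_le_width by (metis real_norm_def)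
  qed
  ultimately show "bounded x \<and> diameter x \<le> width" by simp
qed

lemma card_not_kept_le:
  assumes "finite D"
  shows "card ({1..Suc N} - kept D) \<le> l * card D + 1"
proof -
  have "{n \<in> {1..N}. n div l \<in> D} \<subseteq> (\<Union>t\<in>D. {t*l..<t*l+l})"
  proof
    fix n assume "n \<in> {n \<in> {1..N}. n div l \<in> D}"
    moreover have "n mod l < l" using l1 by simp
    then have "n \<in> {n div l * l..<n div l * l + l}"
      using div_mult_mod_eq[of n l] by (simp only: atLeastLessThan_iff) linarith
    ultimately show "n \<in> (\<Union>t\<in>D. {t*l..<t*l+l})" by blast
  qed
  then have "card {n \<in> {1..N}. n div l \<in> D} \<le> card (\<Union>t\<in>D. {t*l..<t*l+l})"
    by (rule card_mono[rotated]) (use assms in auto)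
  also have "\<dots> \<le> (\<Sum>t\<in>D. card {t*l..<t*l+l})" by (rule card_UN_le[OF assms])
  also have "\<dots> = l * card D" by simp
  finally have "card {n \<in> {1..N}. n div l \<in> D} \<le> l * card D" .
  moreover have "{1..Suc N} - kept D \<subseteq> insert (Suc N) {n \<in> {1..N}. n div l \<in> D}"
    unfolding kept_def by auto
  then have "card ({1..Suc N} - kept D) \<le> card (insert (Suc N) {n \<in> {1..N}. n div l \<in> D})"
    by (intro card_mono) auto
  moreover have "card (insert (Suc N) {n \<in> {1..N}. n div l \<in> D}) \<le> Suc (card {n \<in> {1..N}. n div l \<in> D})"
    by (simp add: card_insert_if)
  ultimately show ?thesis by linarith
qed

lemma card_cells_kept:
  assumes "D \<in> exceptional"
  shows "finite (cells (kept D) 1)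
    \<and> real (card (cells (kept D) 1)) \<le> top_count * branch powr (3 * (real l * \<delta> * real N + 1))"
proof -
  have "finite D" using assms unfolding exceptional_def by (auto intro: finite_subset)
  then have "card (broken (kept D) 1) \<le> 3 * (l * card D + 1)"
    using order_trans[OF card_broken_le mult_le_mono2[OF card_not_kept_le]] by blast
  then have "real (card (broken (kept D) 1)) \<le> real (3 * (l * card D + 1))"
    by (simp only: of_nat_le_iff)
  also have "\<dots> = 3 * (real l * real (card D) + 1)" by simp
  also have "\<dots> \<le> 3 * (real l * \<delta> * real N + 1)"
    using assms l1 unfolding exceptional_def by (auto intro!: mult_left_mono simp: mult.assoc)
  finally have "branch powr real (card (broken (kept D) 1)) \<le> branch powr (3 * (real l * \<delta> * real N + 1))"
    using branch_ge_1 by (intro powr_mono) auto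
  then have "branch ^ card (broken (kept D) 1) \<le> branch powr (3 * (real l * \<delta> * real N + 1))"
    using branch_ge_1 by (simp add: powr_realpow)
  moreover have "0 \<le> top_count" unfolding top_count_def by simp
  ultimately show ?thesis
    using card_cells_le[of 1 "kept D"] N1 by (meson mult_left_mono order_trans)
qed

lemma card_cover_le: "finite cover \<and> real (card cover) \<le> 2 ^ (N div l + 1) * (top_count * branch powr (3 * (real l * \<delta> * real N + 1)))"
proof -
  define K where "K = top_count * branch powr (3 * (real l * \<delta> * real N + 1))"
  have fD: "finite exceptional" unfolding exceptional_def
    by (rule finite_subset[of _ "Pow {..N div l}"]) auto
  have cD: "card exceptional \<le> 2 ^ (N div l + 1)"
  proof -
    have "card exceptional \<le> card (Pow {..N div l})" by (rule card_mono) (auto simp: exceptional_def)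
    then show ?thesis by (simp add: card_Pow)
  qed
  have fS: "finite (SIGMA D:exceptional. cells (kept D) 1)" using fD card_cells_kept by auto
  have "card cover \<le> card (SIGMA D:exceptional. cells (kept D) 1)" unfolding cover_def by (rule card_image_le[OF fS])
  also have "\<dots> = (\<Sum>D\<in>exceptional. card (cells (kept D) 1))" using fD card_cells_kept by (simp add: card_SigmaI)
  finally have "real (card cover) \<le> (\<Sum>D\<in>exceptional. real (card (cells (kept D) 1)))"
    by (metis of_nat_le_iff of_nat_sum)
  also have "\<dots> \<le> real (card exceptional) * K" unfolding K_def
    by (rule sum_bounded_above) (use card_cells_kept in auto)
  also have "\<dots> \<le> 2 ^ (N div l + 1) * K"
  proof (rule mult_right_mono)
    show "real (card exceptional) \<le> 2 ^ (N div l + 1)" using cD by (metis of_nat_le_iff of_nat_numeral of_nat_power)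
    show "0 \<le> K" unfolding K_def top_count_def by simp
  qed
  finally show ?thesis unfolding K_def using fS cover_def by simp
qed

lemma growth_exponent_le:
  assumes "admissible_blocks r s l \<delta>"
  shows "ln 2 / real l + 3 * real l * \<delta> * ln branch - s * ln R \<le> - (s * ln (1/r) / 4)"
proof -
  define L where "L = ln R"
  define lam where "lam = ln (1/r)"
  have s0: "0 < s" and d0: "0 \<le> \<delta>" and c_l: "ln 2 / real l \<le> s * lam / 4"
    and c_d1: "3 * real l * \<delta> * ln 5 \<le> s * lam / 4" and c_d2: "6 * real l * \<delta> \<le> s / 4"
    using assms unfolding admissible_blocks_def lam_def by auto
  have lam0: "0 < lam" unfolding lam_def using r0 r1 by simp
  have Llam: "lam \<le> L" unfolding L_def lam_def by (rule ln_inverse_r_le_ln_R)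
  have "3 * real l * \<delta> * ln branch \<le> 3 * real l * \<delta> * (ln 5 + 2 * L)"
    using ln_branch_le d0 unfolding L_def by (intro mult_left_mono) auto
  moreover have "6 * real l * \<delta> * L \<le> s / 4 * L" using c_d2 Llam lam0 by (intro mult_right_mono) auto
  moreover have "s * lam \<le> s * L" using Llam s0 by (intro mult_left_mono) auto
  ultimately show ?thesis using c_l c_d1 unfolding L_def lam_def by (simp add: algebra_simps)
qed

lemma card_cover_mult_width_powr_le:
  assumes "admissible_blocks r s l \<delta>"
  shows "real (card cover) * width powr s
    \<le> (2 * top_count * branch^3 * width_coeff powr s) * exp (- (s * ln (1/r) / 4) * real N)"
proof -
  define L where "L = ln R"
  define lam where "lam = ln (1/r)"
  have branch_pos: "0 < branch" using branch_ge_1 by simp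
  have top_count_nonneg: "0 \<le> top_count" unfolding top_count_def by simp
  have branch_powr_eq: "branch powr (3 * (real l * \<delta> * real N + 1)) = branch^3 * exp (3 * real l * \<delta> * real N * ln branch)"
  proof -
    have "branch powr (3 * (real l * \<delta> * real N + 1)) = branch powr (3 * real l * \<delta> * real N) * branch powr 3"
      by (simp add: powr_add[symmetric] algebra_simps)
    moreover have "branch powr 3 = branch^3" using branch_pos powr_realpow[of branch 3] by simp
    moreover have "branch powr (3 * real l * \<delta> * real N) = exp (3 * real l * \<delta> * real N * ln branch)"
      unfolding powr_def using branch_pos by simp
    ultimately show ?thesis by simp
  qed
  have exponent_le: "ln 2 * real N / real l + 3 * real l * \<delta> * real N * ln branch - s * real N * L
      \<le> - (s * lam / 4) * real N"
  proof -
    have "real N * (ln 2 / real l + 3 * real l * \<delta> * ln branch - s * L) \<le> real N * (- (s * lam / 4))"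
      using growth_exponent_le[OF assms] unfolding L_def lam_def by (intro mult_left_mono) auto
    then show ?thesis by (simp add: algebra_simps)
  qed
  have "real (card cover) * width powr s \<le> (2 ^ (N div l + 1) * (top_count * branch powr (3 * (real l * \<delta> * real N + 1)))) * width powr s"
    using card_cover_le by (intro mult_right_mono) auto
  also have "\<dots> \<le> (2 * exp (ln 2 * real N / real l) * (top_count * (branch^3 * exp (3 * real l * \<delta> * real N * ln branch)))) * (width_coeff powr s * exp (- (s * real N * L)))"
    unfolding branch_powr_eq width_powr_eq L_def using top_count_nonneg branch_pos by (intro mult_right_mono power_two_div_le_exp) auto
  also have "\<dots> = (2 * top_count * branch^3 * width_coeff powr s) * exp (ln 2 * real N / real l + 3 * real l * \<delta> * real N * ln branch - s * real N * L)"
    by (simp add: exp_add exp_diff exp_minus field_simps)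
  also have "\<dots> \<le> (2 * top_count * branch^3 * width_coeff powr s) * exp (- (s * lam / 4) * real N)"
    using exponent_le top_count_nonneg branch_pos by (intro mult_left_mono) auto
  finally show ?thesis unfolding lam_def .
qed

lemma hausdorff_pre_Eqk_le:
  assumes "admissible_blocks r s l \<delta>" "width \<le> d"
  shows "hausdorff_pre s d (Eqk r \<gamma> b \<theta> q k \<delta> N)
    \<le> ennreal (2 * top_count * branch^3 * width_coeff powr s * exp (- (s * ln (1/r) / 4)) ^ N)"
proof -
  have "0 < s" using assms(1) unfolding admissible_blocks_def by simp
  then have "hausdorff_pre s d (Eqk r \<gamma> b \<theta> q k \<delta> N) \<le> ennreal (real (card cover) * width powr s)"
    using card_cover_le Eqk_subset_Union_cover cover_sets width_pos assms(2)
    by (intro hausdorff_pre_le_finite_cover) auto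
  also have "\<dots> \<le> ennreal (2 * top_count * branch^3 * width_coeff powr s * exp (- (s * ln (1/r) / 4)) ^ N)"
    using card_cover_mult_width_powr_le[OF assms(1)]
    by (intro ennreal_leI) (simp add: exp_of_nat_mult[symmetric] mult.commute)
  finally show ?thesis .
qed

end

lemma sin_nat_mult_neq_0:
  assumes "\<theta> / pi \<notin> \<rat>" "n \<noteq> 0"
  shows "sin (real n * \<theta>) \<noteq> 0"
proof
  assume "sin (real n * \<theta>) = 0"
  then obtain m :: int where "real n * \<theta> = of_int m * pi" by (auto simp: sin_zero_iff_int2)
  then have "\<theta> / pi = of_int m / real n" using assms(2) by (simp add: field_simps)
  then show False using assms(1) by (simp add: Rats_divide)
qed

lemma cos_orbitI:
  assumes "0 < r" "r < 1" "0 < b" "\<theta> / pi \<notin> \<rat>" "1 \<le> q" "1 \<le> k"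
  shows "cos_orbit r b \<theta> q k"
  using assms sin_nat_mult_neq_0[OF assms(4), of "q * k"] unfolding cos_orbit_def by (simp add: mult.assoc)

lemma hausdorff_pre_limsup_Eqk_eq_0:
  assumes orbit: "cos_orbit r b \<theta> q k" and l: "1 \<le> l" and adm: "admissible_blocks r s l \<delta>" and "0 < d"
  shows "hausdorff_pre s d (\<Inter>N0. \<Union>N\<in>{N0..}. Eqk r \<gamma> b \<theta> q k \<delta> N) = 0"
proof -
  interpret C: cos_orbit r \<gamma> b \<theta> q k 0 by (rule orbit)
    \<comment> \<open>any N will do: only constants independent of N are taken from C\<close>
  define \<sigma> where "\<sigma> = exp (- (s * ln (1/r) / 4))"
  have "0 < s" using adm unfolding admissible_blocks_def by simp
  then have \<sigma>: "0 < \<sigma>" "\<sigma> < 1" unfolding \<sigma>_def using C.r0 C.r1 by auto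
  have "(\<lambda>N. C.width_coeff * exp (- ln C.R) ^ N) \<longlonglongrightarrow> C.width_coeff * 0"
    using C.R_gt_1 by (intro tendsto_intros LIMSEQ_power_zero) auto
  then have "eventually (\<lambda>N. C.width_coeff * exp (- ln C.R) ^ N < d) sequentially"
    using \<open>0 < d\<close> by (intro order_tendstoD(2)) auto
  then obtain M where M: "\<And>N. M \<le> N \<Longrightarrow> C.width_coeff * exp (- ln C.R) ^ N < d"
    unfolding eventually_sequentially by blast
  show ?thesis
  proof (rule hausdorff_pre_limsup_eq_0)
    show "summable (\<lambda>N. 2 * C.top_count * C.branch^3 * C.width_coeff powr s * \<sigma> ^ N)"
      using \<sigma> by (intro summable_mult summable_geometric) auto
    show "0 \<le> 2 * C.top_count * C.branch^3 * C.width_coeff powr s * \<sigma> ^ N" for N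
      using C.branch_ge_1 \<sigma> by (simp add: C.top_count_def)
    fix N assume N: "max M 1 \<le> N"
    interpret cos_orbit_cover r \<gamma> b \<theta> q k N l \<delta>
      using orbit l N by (simp add: cos_orbit_cover_def cos_orbit_cover_axioms_def)
    have "width \<le> d"
      using M[of N] N unfolding width_eq by (simp add: exp_of_nat_mult[symmetric] mult.commute)
    then show "hausdorff_pre s d (Eqk r \<gamma> b \<theta> q k \<delta> N)
      \<le> ennreal (2 * C.top_count * C.branch^3 * C.width_coeff powr s * \<sigma> ^ N)"
      unfolding \<sigma>_def by (rule hausdorff_pre_Eqk_le[OF adm])
  qed
qed

lemma exists_admissible_blocks:
  assumes "0 < r" "r < 1" "0 < s"
  obtains l i :: nat where "1 \<le> l" "3 \<le> i" "admissible_blocks r s l (1 / real i)"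
proof -
  define lam where "lam = ln (1/r)"
  have lam0: "0 < lam" unfolding lam_def using assms by simp
  define l :: nat where "l = nat \<lceil>4 * ln 2 / (s * lam)\<rceil> + 1"
  have l1: "1 \<le> l" and lge: "4 * ln 2 / (s * lam) \<le> real l" unfolding l_def by linarith+
  define i :: nat where "i = nat \<lceil>12 * real l * ln 5 / (s * lam) + 24 * real l / s\<rceil> + 3"
  have i3: "3 \<le> i" and ige: "12 * real l * ln 5 / (s * lam) + 24 * real l / s \<le> real i"
    unfolding i_def by linarith+
  have p1: "0 \<le> 12 * real l * ln 5 / (s * lam)" and p2: "0 \<le> 24 * real l / s"
    using assms lam0 by simp_all
  have "ln 2 / real l \<le> s * lam / 4"
  proof -
    have "4 * ln 2 \<le> real l * (s * lam)" using lge assms lam0 by (simp add: divide_le_eq mult.commute)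
    then show ?thesis using l1 by (simp add: divide_le_eq field_simps)
  qed
  moreover have "3 * real l * (1 / real i) * ln 5 \<le> s * lam / 4"
  proof -
    have "12 * real l * ln 5 / (s * lam) \<le> real i" using ige p2 by linarith
    then have "12 * real l * ln 5 \<le> real i * (s * lam)" using assms lam0 by (simp add: divide_le_eq)
    then show ?thesis using i3 by (simp add: field_simps)
  qed
  moreover have "6 * real l * (1 / real i) \<le> s / 4"
  proof -
    have "24 * real l / s \<le> real i" using ige p1 by linarith
    then have "24 * real l \<le> real i * s" using assms by (simp add: divide_le_eq)
    then show ?thesis using i3 by (simp add: field_simps)
  qed
  ultimately have "admissible_blocks r s l (1 / real i)"
    using assms unfolding admissible_blocks_def lam_def by simp
  with l1 i3 show ?thesis by (rule that)
qed

lemma Eset_subset_Union_limsup: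
  assumes "3 \<le> i"
  shows "Eset r \<gamma> b \<theta> \<subseteq> (\<Union>(q, k)\<in>{1..}\<times>{1..}. \<Inter>N0. \<Union>N\<in>{N0..}. Eqk r \<gamma> b \<theta> q k (1 / real i) N)"
proof
  fix x assume "x \<in> Eset r \<gamma> b \<theta>"
  then have "x \<in> (\<Union>q\<in>{1::nat..}. \<Union>k\<in>{1::nat..}.
      \<Inter>N0. \<Union>N\<in>{N. N \<ge> N0 \<and> N \<ge> 2}. Eqk r \<gamma> b \<theta> q k (1 / real i) N)"
    unfolding Eset_def by (rule INT_D) (simp add: assms)
  then obtain q k :: nat where qk: "(q, k) \<in> {1..}\<times>{1..}"
    and x: "x \<in> (\<Inter>N0. \<Union>N\<in>{N. N \<ge> N0 \<and> N \<ge> 2}. Eqk r \<gamma> b \<theta> q k (1 / real i) N)"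
    by blast
  have "(\<Inter>N0. \<Union>N\<in>{N. N \<ge> N0 \<and> N \<ge> 2}. Eqk r \<gamma> b \<theta> q k (1 / real i) N)
      \<subseteq> (\<Inter>N0. \<Union>N\<in>{N0..}. Eqk r \<gamma> b \<theta> q k (1 / real i) N)"
    by (intro INF_superset_mono UN_mono) auto
  with x have "x \<in> (\<Inter>N0. \<Union>N\<in>{N0..}. Eqk r \<gamma> b \<theta> q k (1 / real i) N)" by (rule subsetD[rotated])
  with qk show "x \<in> (\<Union>(q, k)\<in>{1..}\<times>{1..}. \<Inter>N0. \<Union>N\<in>{N0..}. Eqk r \<gamma> b \<theta> q k (1 / real i) N)"
    by (rule UN_I[where a="(q, k)", OF _ subst[OF case_prod_conv[symmetric]]])
qed

theorem lemma4p4: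
  fixes r \<gamma> b \<theta> :: real
  assumes "0 < r" "r < 1" "0 < b" "\<theta> / pi \<notin> \<rat>"
  shows "hausdorff_dim (Eset r \<gamma> b \<theta>) = 0"
proof (rule hausdorff_dim_eq_0I)
  fix s :: real assume "0 < s"
  obtain l i where l: "1 \<le> l" and i: "3 \<le> i" and adm: "admissible_blocks r s l (1 / real i)"
    by (rule exists_admissible_blocks[OF assms(1,2) \<open>0 < s\<close>])
  show "hausdorff_measure s (Eset r \<gamma> b \<theta>) = 0"
  proof (rule hausdorff_measure_eq_0I)
    fix d :: real assume "0 < d"
    let ?limsup = "\<lambda>(q, k). \<Inter>N0. \<Union>N\<in>{N0..}. Eqk r \<gamma> b \<theta> q k (1 / real i) N"
    have "hausdorff_pre s d (\<Union>qk\<in>{1..}\<times>{1..}. ?limsup qk) = 0"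
      using \<open>0 < d\<close> assms
      by (intro hausdorff_pre_UN_eq_0) (auto intro!: hausdorff_pre_limsup_Eqk_eq_0[OF _ l adm] cos_orbitI)
    moreover have "Eset r \<gamma> b \<theta> \<subseteq> (\<Union>qk\<in>{1..}\<times>{1..}. ?limsup qk)"
      using Eset_subset_Union_limsup[OF i] .
    ultimately show "hausdorff_pre s d (Eset r \<gamma> b \<theta>) = 0"
      using hausdorff_pre_mono[of "Eset r \<gamma> b \<theta>"] by (metis le_zero_eq)
  qed
qed

end
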